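(* Let $\varphi$ be a rule defined on $\mathcal{E}_{\mathcal{SP}}$. Then $\varphi$ satisfies own-peak-onliness, efficiency, the equal division guarantee, and not obvious manipulability (NOM) if and only if $\varphi$ is a simple rule.
   Context: Let $N=\{1,\dots,n\}$ be a finite set of agents. A preference $R_i$ is a continuous complete preorder on $\mathbb{R}_+\cup\{\infty\}$, with strict part $P_i$ and indifference $I_i$. Its peak is $p(R_i)=\{x: xR_iy \text{ for all } y\in\mathbb{R}_+\cup\{\infty\}\}$; when it is a singleton we identify it with its element. $R_i$ is single-peaked if $p(R_i)$ is a singleton and for all $x,x'\in\mathbb{R}_+$, $xP_ix'$ whenever $x'<x\le p(R_i)$ or $p(R_i)\le x<x'$. $\mathcal{SP}$ is the set of single-peaked preferences. An economy is a pair $(R,\Omega)$ with $R=(R_j)_{j\in N}\in\mathcal{SP}^n$ and $\Omega>0$; $\mathcal{E}_{\mathcal{SP}}$ is the set of all economies. A rule is a map $\varphi:\mathcal{E}_{\mathcal{SP}}\to\mathbb{R}^n_+$ with $\sum_{j\in N}\varphi_j(R,\Omega)=\Omega$ for every economy. Properties: Efficiency: for no economy is there $x\in\mathbb{R}^n_+$ with $\sum_j x_j=\Omega$, $x_iR_i\varphi_i(R,\Omega)$ for all $i$ and $x_iP_i\varphi_i(R,\Omega)$ for some $i$. Own-peak-onliness: if $p(R_i')=p(R_i)$ then $\varphi_i(R,\Omega)=\varphi_i(R_i',R_{-i},\Omega)$. Equal division guarantee: for every economy $(R,\Omega)$ and $i$ with $p(R_i)=\Omega/n$, $\varphi_i(R,\Omega)\,I_i\,\Omega/n$.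 Option set: $O^\varphi(R_i,\Omega)=\{\varphi_i(R_i,R_{-i},\Omega): R_{-i}\in\mathcal{SP}^{n-1}\}$. $R_i'$ is a manipulation of $\varphi$ at $(R_i,\Omega)$ if $\varphi_i(R_i',R_{-i},\Omega)P_i\varphi_i(R_i,R_{-i},\Omega)$ for some $R_{-i}$; it is an obvious manipulation if moreover for every $x'\in O^\varphi(R_i',\Omega)$ there is $x\in O^\varphi(R_i,\Omega)$ with $x'P_ix$. $\varphi$ is NOM if no agent $i$ has an obvious manipulation at any $(R_i,\Omega)$. Simple rules: for an economy let $z(R,\Omega)=\sum_j p(R_j)-\Omega$. Agent $i$ is simple if either $z(R,\Omega)\ge0$ and $p(R_i)<\Omega/n$, or $z(R,\Omega)\le 0$ and $p(R_i)>\Omega/n$; $N^+(R,\Omega)$ is the set of simple agents and $N^-(R,\Omega)=N\setminus N^+(R,\Omega)$. Let $E(R,\Omega)=\left|\Omega-\left(\sum_{j\in N^+}p(R_j)+|N^-|\frac{\Omega}{n}\right)\right|$. An own-peak-only rule $\varphi$ is simple if for every economy and every $i$: $\varphi_i(R,\Omega)=p(R_i)$ if $i\in N^+(R,\Omega)$; $\varphi_i(R,\Omega)=\frac{\Omega}{n}+\nu_i$ if $i\in N^-(R,\Omega)$ and $z(R,\Omega)\ge0$; $\varphi_i(R,\Omega)=\frac{\Omega}{n}-\nu_i$ if $i\in N^-(R,\Omega)$ and $z(R,\Omega)\le0$; where the numbers $\nu_i=\nu_i(R,\Omega)$ satisfy $0\le\nu_i\le|p(R_i)-\frac{\Omega}{n}|$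 and $\sum_{j\in N^-(R,\Omega)}\nu_j=E(R,\Omega)$. *)

theory Defs
  imports "HOL-Analysis.Analysis"
begin

text \<open>Consumption space R_+ \<union> {\<infinity>}, represented inside the extended reals.\<close>
definition Xsp :: "ereal set" where
  "Xsp = {x. 0 \<le> x}"

type_synonym pref = "ereal \<Rightarrow> ereal \<Rightarrow> bool"

definition strict :: "pref \<Rightarrow> ereal \<Rightarrow> ereal \<Rightarrow> bool" where
  "strict R x y \<longleftrightarrow> R x y \<and> \<not> R y x"

definition indiff :: "pref \<Rightarrow> ereal \<Rightarrow> ereal \<Rightarrow> bool" where
  "indiff R x y \<longleftrightarrow> R x y \<and> R y x"

definition continuous_complete_preorder :: "pref \<Rightarrow> bool" where
  "continuous_complete_preorder R \<longleftrightarrow>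
     (\<forall>x y. R x y \<longrightarrow> x \<in> Xsp \<and> y \<in> Xsp) \<and>
     (\<forall>x\<in>Xsp. R x x) \<and>
     (\<forall>x\<in>Xsp. \<forall>y\<in>Xsp. \<forall>z\<in>Xsp. R x y \<longrightarrow> R y z \<longrightarrow> R x z) \<and>
     (\<forall>x\<in>Xsp. \<forall>y\<in>Xsp. R x y \<or> R y x) \<and>
     (\<forall>x\<in>Xsp. closedin (top_of_set Xsp) {y\<in>Xsp. R y x} \<and>
                closedin (top_of_set Xsp) {y\<in>Xsp. R x y})"

definition peak_set :: "pref \<Rightarrow> ereal set" where
  "peak_set R = {x\<in>Xsp. \<forall>y\<in>Xsp. R x y}"

definition peak :: "pref \<Rightarrow> ereal" where
  "peak R = (THE p. peak_set R = {p})"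

definition single_peaked :: "pref \<Rightarrow> bool" where
  "single_peaked R \<longleftrightarrow> continuous_complete_preorder R \<and>
     (\<exists>p. peak_set R = {p}) \<and>
     (\<forall>x x' :: real. 0 \<le> x \<longrightarrow> 0 \<le> x' \<longrightarrow>
        ((x' < x \<and> ereal x \<le> peak R) \<or> (peak R \<le> ereal x \<and> x < x')) \<longrightarrow>
        strict R (ereal x) (ereal x'))"

text \<open>Agents are the elements of a finite type 'n; n = CARD('n).
  A rule maps a profile and an amount \<Omega> to an allocation.\<close>
type_synonym 'n rule = "('n \<Rightarrow> pref) \<Rightarrow> real \<Rightarrow> 'n \<Rightarrow> real"

definition economy :: "('n \<Rightarrow> pref) \<Rightarrow> real \<Rightarrow> bool" where
  "economy R \<Omega> \<longleftrightarrow> (\<forall>j. single_peaked (R j)) \<and> \<Omega> > 0"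

definition is_rule :: "('n::finite) rule \<Rightarrow> bool" where
  "is_rule \<phi> \<longleftrightarrow> (\<forall>R \<Omega>. economy R \<Omega> \<longrightarrow>
      (\<forall>i. \<phi> R \<Omega> i \<ge> 0) \<and> (\<Sum>j\<in>UNIV. \<phi> R \<Omega> j) = \<Omega>)"

definition efficient :: "('n::finite) rule \<Rightarrow> bool" where
  "efficient \<phi> \<longleftrightarrow> (\<forall>R \<Omega>. economy R \<Omega> \<longrightarrow>
      \<not> (\<exists>x :: 'n \<Rightarrow> real. (\<forall>j. x j \<ge> 0) \<and> (\<Sum>j\<in>UNIV. x j) = \<Omega> \<and>
            (\<forall>i. R i (ereal (x i)) (ereal (\<phi> R \<Omega> i))) \<and>
            (\<exists>i. strict (R i) (ereal (x i)) (ereal (\<phi> R \<Omega> i)))))"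

definition own_peak_only :: "('n::finite) rule \<Rightarrow> bool" where
  "own_peak_only \<phi> \<longleftrightarrow> (\<forall>R \<Omega> i Ri'. economy R \<Omega> \<longrightarrow> single_peaked Ri' \<longrightarrow>
      peak Ri' = peak (R i) \<longrightarrow> \<phi> R \<Omega> i = \<phi> (R(i := Ri')) \<Omega> i)"

definition equal_division_guarantee :: "('n::finite) rule \<Rightarrow> bool" where
  "equal_division_guarantee \<phi> \<longleftrightarrow> (\<forall>R \<Omega> i. economy R \<Omega> \<longrightarrow>
      peak (R i) = ereal (\<Omega> / real CARD('n)) \<longrightarrow>
      indiff (R i) (ereal (\<phi> R \<Omega> i)) (ereal (\<Omega> / real CARD('n))))"

definition option_set :: "('n::finite) rule \<Rightarrow> 'n \<Rightarrow> pref \<Rightarrow> real \<Rightarrow> real set" where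
  "option_set \<phi> i Ri \<Omega> = {\<phi> R \<Omega> i | R. (\<forall>j. single_peaked (R j)) \<and> R i = Ri}"

definition manipulation :: "('n::finite) rule \<Rightarrow> 'n \<Rightarrow> pref \<Rightarrow> real \<Rightarrow> pref \<Rightarrow> bool" where
  "manipulation \<phi> i Ri \<Omega> Ri' \<longleftrightarrow>
     (\<exists>R. (\<forall>j. single_peaked (R j)) \<and>
          strict Ri (ereal (\<phi> (R(i := Ri')) \<Omega> i)) (ereal (\<phi> (R(i := Ri)) \<Omega> i)))"

definition obvious_manipulation :: "('n::finite) rule \<Rightarrow> 'n \<Rightarrow> pref \<Rightarrow> real \<Rightarrow> pref \<Rightarrow> bool" where
  "obvious_manipulation \<phi> i Ri \<Omega> Ri' \<longleftrightarrow>
     manipulation \<phi> i Ri \<Omega> Ri' \<and>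
     (\<forall>x'\<in>option_set \<phi> i Ri' \<Omega>. \<exists>x\<in>option_set \<phi> i Ri \<Omega>. strict Ri (ereal x') (ereal x))"

definition NOM :: "('n::finite) rule \<Rightarrow> bool" where
  "NOM \<phi> \<longleftrightarrow> (\<forall>i Ri Ri' \<Omega>. single_peaked Ri \<longrightarrow> single_peaked Ri' \<longrightarrow> \<Omega> > 0 \<longrightarrow>
      \<not> obvious_manipulation \<phi> i Ri \<Omega> Ri')"

definition zexc :: "('n::finite \<Rightarrow> pref) \<Rightarrow> real \<Rightarrow> ereal" where
  "zexc R \<Omega> = (\<Sum>j\<in>UNIV. peak (R j)) - ereal \<Omega>"

definition simple_agents :: "('n::finite \<Rightarrow> pref) \<Rightarrow> real \<Rightarrow> 'n set" where
  "simple_agents R \<Omega> = {i. (zexc R \<Omega> \<ge> 0 \<and> peak (R i) < ereal (\<Omega> / real CARD('n))) \<or>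
                          (zexc R \<Omega> \<le> 0 \<and> peak (R i) > ereal (\<Omega> / real CARD('n)))}"

definition Eexc :: "('n::finite \<Rightarrow> pref) \<Rightarrow> real \<Rightarrow> ereal" where
  "Eexc R \<Omega> = \<bar>ereal \<Omega> - ((\<Sum>j\<in>simple_agents R \<Omega>. peak (R j)) +
       ereal (real (card (UNIV - simple_agents R \<Omega>)) * (\<Omega> / real CARD('n))))\<bar>"

definition simple_rule :: "('n::finite) rule \<Rightarrow> bool" where
  "simple_rule \<phi> \<longleftrightarrow> own_peak_only \<phi> \<and>
    (\<forall>R \<Omega>. economy R \<Omega> \<longrightarrow>
      (\<exists>\<nu> :: 'n \<Rightarrow> real.
         (\<forall>i\<in>UNIV - simple_agents R \<Omega>. 0 \<le> \<nu> i \<and>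
              ereal (\<nu> i) \<le> \<bar>peak (R i) - ereal (\<Omega> / real CARD('n))\<bar>) \<and>
         ereal (\<Sum>j\<in>UNIV - simple_agents R \<Omega>. \<nu> j) = Eexc R \<Omega> \<and>
         (\<forall>i. (i \<in> simple_agents R \<Omega> \<longrightarrow> ereal (\<phi> R \<Omega> i) = peak (R i)) \<and>
              (i \<notin> simple_agents R \<Omega> \<and> zexc R \<Omega> \<ge> 0 \<longrightarrow>
                  \<phi> R \<Omega> i = \<Omega> / real CARD('n) + \<nu> i) \<and>
              (i \<notin> simple_agents R \<Omega> \<and> zexc R \<Omega> \<le> 0 \<longrightarrow>
                  \<phi> R \<Omega> i = \<Omega> / real CARD('n) - \<nu> i))))"

end

theory Submission
  imports Defs
begin

text \<open>
  Efficiency amounts to same-sidedness: when the peaks add up to at least \<open>\<Omega>\<close> nobody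
  receives more than their peak, and when they add up to at most \<open>\<Omega>\<close> nobody receives less,
  since otherwise a small transfer between an agent above and an agent below the peak is a
  Pareto improvement.

  Under own-peak-onliness, the equal division guarantee and NOM, every share lies between
  the agent's peak and \<open>\<Omega>/n\<close>. Otherwise some single-peaked preference with the same peak
  strictly prefers \<open>\<Omega>/n\<close> to the share (if the share lies beyond the peak, a piecewise
  linear preference that is steep enough on that side), and for an agent with this
  preference, reporting a peak at \<open>\<Omega>/n\<close>, which by the guarantee yields exactly \<open>\<Omega>/n\<close>
  whatever the others report, is an obvious manipulation. Conversely, if all shares lie
  between peak and \<open>\<Omega>/n\<close>, every truthful outcome is weakly preferred to \<open>\<Omega>/n\<close>, which
  is in the option set of any report (take all other agents peaked at \<open>\<Omega>/n\<close>), so no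
  manipulation is obvious.

  Same-sidedness together with the betweenness condition is exactly the allocation
  prescribed by a simple rule, with \<open>\<nu>\<^sub>i = |x\<^sub>i - \<Omega>/n|\<close>.
\<close>

section \<open>Single-peaked preferences\<close>

lemma single_peaked_peak_set:
  assumes "single_peaked R"
  shows "peak_set R = {peak R}"
proof -
  obtain p where p: "peak_set R = {p}"
    using assms unfolding single_peaked_def by blast
  then have "peak R = p"
    unfolding peak_def by (rule the_equality) (use p in auto)
  with p show ?thesis by simp
qed

lemma single_peaked_peak_nonneg: "single_peaked R \<Longrightarrow> 0 \<le> peak R"
  using single_peaked_peak_set[of R] by (auto simp: peak_set_def Xsp_def)

lemma single_peaked_peak_cases:
  assumes "single_peaked R"
  obtains "peak R = \<infinity>" | p where "peak R = ereal p" "0 \<le> p"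
  using single_peaked_peak_nonneg[OF assms] by (cases "peak R") auto

lemma single_peaked_refl:
  assumes "single_peaked R" "0 \<le> x"
  shows "R (ereal x) (ereal x)"
proof -
  have "ereal x \<in> Xsp" using assms(2) by (simp add: Xsp_def)
  with assms(1) show ?thesis
    unfolding single_peaked_def continuous_complete_preorder_def by blast
qed

lemma single_peaked_total:
  assumes "single_peaked R" "0 \<le> x" "0 \<le> y"
  shows "R (ereal x) (ereal y) \<or> R (ereal y) (ereal x)"
proof -
  have "ereal x \<in> Xsp" "ereal y \<in> Xsp" using assms(2,3) by (simp_all add: Xsp_def)
  with assms(1) show ?thesis
    unfolding single_peaked_def continuous_complete_preorder_def by blast
qed

lemma single_peaked_strict:
  assumes "single_peaked R" "0 \<le> x" "0 \<le> y"
    and "y < x \<and> ereal x \<le> peak R \<or> peak R \<le> ereal x \<and> x < y"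
  shows "strict R (ereal x) (ereal y)"
  using assms unfolding single_peaked_def by blast

lemma strict_below_peak:
  "single_peaked R \<Longrightarrow> 0 \<le> y \<Longrightarrow> y < x \<Longrightarrow> ereal x \<le> peak R \<Longrightarrow> strict R (ereal x) (ereal y)"
  by (rule single_peaked_strict) auto

lemma strict_above_peak:
  "single_peaked R \<Longrightarrow> 0 \<le> x \<Longrightarrow> peak R \<le> ereal x \<Longrightarrow> x < y \<Longrightarrow> strict R (ereal x) (ereal y)"
  by (rule single_peaked_strict) auto

definition kinked_loss :: "real \<Rightarrow> real \<Rightarrow> real \<Rightarrow> ereal \<Rightarrow> ereal" where
  "kinked_loss a b p x =
     (case x of ereal r \<Rightarrow> ereal (if r \<le> p then a * (p - r) else b * (r - p)) | _ \<Rightarrow> \<infinity>)"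

definition kinked_pref :: "real \<Rightarrow> real \<Rightarrow> real \<Rightarrow> pref" where
  "kinked_pref a b p x y \<longleftrightarrow> x \<in> Xsp \<and> y \<in> Xsp \<and> kinked_loss a b p x \<le> kinked_loss a b p y"

lemma kinked_loss_ereal:
  "kinked_loss a b p (ereal r) = ereal (if r \<le> p then a * (p - r) else b * (r - p))"
  by (simp add: kinked_loss_def)

lemma kinked_loss_le_iff:
  assumes "0 < a" "0 < b" "0 \<le> s"
  shows "kinked_loss a b p y \<le> ereal s \<longleftrightarrow> ereal (p - s / a) \<le> y \<and> y \<le> ereal (p + s / b)"
proof (cases y)
  case (real r)
  have slopes: "s / a = 0 \<and> s / b = 0 \<or> 0 < s / a \<and> 0 < s / b"
    using assms by auto
  show ?thesis
  proof (cases "r \<le> p")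
    case True
    have "a * (p - r) \<le> s \<longleftrightarrow> p - s / a \<le> r"
      using assms(1) by (simp add: field_simps)
    then show ?thesis using real True slopes by (auto simp: kinked_loss_ereal)
  next
    case False
    have "b * (r - p) \<le> s \<longleftrightarrow> r \<le> p + s / b"
      using assms(2) by (simp add: field_simps)
    then show ?thesis using real False slopes by (auto simp: kinked_loss_ereal)
  qed
qed (simp_all add: kinked_loss_def)

lemma ereal_le_kinked_loss_iff:
  assumes "0 < a" "0 < b" "0 \<le> s"
  shows "ereal s \<le> kinked_loss a b p y \<longleftrightarrow> y \<le> ereal (p - s / a) \<or> ereal (p + s / b) \<le> y"
proof (cases y)
  case (real r)
  have slopes: "s / a = 0 \<and> s / b = 0 \<or> 0 < s / a \<and> 0 < s / b"
    using assms by auto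
  show ?thesis
  proof (cases "r \<le> p")
    case True
    have "s \<le> a * (p - r) \<longleftrightarrow> r \<le> p - s / a"
      using assms(1) by (simp add: field_simps)
    then show ?thesis using real True slopes by (auto simp: kinked_loss_ereal)
  next
    case False
    have "s \<le> b * (r - p) \<longleftrightarrow> p + s / b \<le> r"
      using assms(2) by (simp add: field_simps)
    then show ?thesis using real False slopes by (auto simp: kinked_loss_ereal)
  qed
qed (simp_all add: kinked_loss_def)

lemma strict_kinked_pref_iff:
  assumes "0 \<le> x" "0 \<le> y"
  shows "strict (kinked_pref a b p) (ereal x) (ereal y) \<longleftrightarrow>
    kinked_loss a b p (ereal x) < kinked_loss a b p (ereal y)"
  using assms by (auto simp: strict_def kinked_pref_def Xsp_def)

lemma kinked_pref_closed:
  assumes "0 < a" "0 < b" "x \<in> Xsp"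
  shows "closedin (top_of_set Xsp) {y\<in>Xsp. kinked_pref a b p y x}"
    and "closedin (top_of_set Xsp) {y\<in>Xsp. kinked_pref a b p x y}"
proof -
  have "closedin (top_of_set Xsp) {y\<in>Xsp. kinked_pref a b p y x} \<and>
        closedin (top_of_set Xsp) {y\<in>Xsp. kinked_pref a b p x y}"
  proof (cases x)
    case (real r)
    define s where "s = (if r \<le> p then a * (p - r) else b * (r - p))"
    have s: "kinked_loss a b p x = ereal s" "0 \<le> s"
      using real assms(1,2) by (auto simp: s_def kinked_loss_ereal)
    have "{y\<in>Xsp. kinked_pref a b p y x} = Xsp \<inter> {ereal (p - s / a) .. ereal (p + s / b)}"
      using assms s by (auto simp: kinked_pref_def kinked_loss_le_iff)
    moreover have "{y\<in>Xsp. kinked_pref a b p x y} =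
        Xsp \<inter> ({.. ereal (p - s / a)} \<union> {ereal (p + s / b) ..})"
      using assms s by (auto simp: kinked_pref_def ereal_le_kinked_loss_iff)
    ultimately show ?thesis
      by (auto intro!: closedin_closed_Int closed_Un)
  next
    case PInf
    have "{y\<in>Xsp. kinked_pref a b p y x} = Xsp"
      using PInf assms(3) by (auto simp: kinked_pref_def kinked_loss_def)
    moreover have "kinked_loss a b p y = \<infinity> \<longleftrightarrow> y = \<infinity> \<or> y = -\<infinity>" for y
      by (cases y) (auto simp: kinked_loss_def)
    then have "{y\<in>Xsp. kinked_pref a b p x y} = Xsp \<inter> {\<infinity>}"
      using PInf assms(3) by (auto simp: kinked_pref_def kinked_loss_def Xsp_def)
    ultimately show ?thesis
      by (auto intro: closedin_closed_Int)
  next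
    case MInf
    then show ?thesis using assms(3) by (simp add: Xsp_def)
  qed
  then show "closedin (top_of_set Xsp) {y\<in>Xsp. kinked_pref a b p y x}"
    and "closedin (top_of_set Xsp) {y\<in>Xsp. kinked_pref a b p x y}"
    by auto
qed

lemma single_peaked_kinked_pref:
  assumes "0 < a" "0 < b" "0 \<le> p"
  shows "single_peaked (kinked_pref a b p)" and "peak (kinked_pref a b p) = ereal p"
proof -
  let ?Q = "kinked_pref a b p"
  have loss_nonneg: "0 \<le> kinked_loss a b p y" for y
    using assms(1,2) by (cases y) (auto simp: kinked_loss_def)
  have loss_zero: "kinked_loss a b p y \<le> 0 \<Longrightarrow> y = ereal p" for y
    using assms(1,2) by (cases y) (auto simp: kinked_loss_def zero_ereal_def mult_le_0_iff split: if_splits)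
  have loss_peak: "kinked_loss a b p (ereal p) = 0"
    by (simp add: kinked_loss_ereal zero_ereal_def)
  have "x \<in> peak_set ?Q \<longleftrightarrow> x = ereal p" for x
  proof
    assume "x \<in> peak_set ?Q"
    moreover have "ereal p \<in> Xsp"
      using assms(3) by (simp add: Xsp_def)
    ultimately have "?Q x (ereal p)"
      unfolding peak_set_def by blast
    then have "kinked_loss a b p x \<le> 0"
      using loss_peak by (simp add: kinked_pref_def)
    then show "x = ereal p" by (rule loss_zero)
  next
    assume "x = ereal p"
    then show "x \<in> peak_set ?Q"
      using assms(3) loss_nonneg loss_peak unfolding peak_set_def kinked_pref_def Xsp_def by simp
  qed
  then have "peak_set ?Q = {ereal p}" by blast
  then show peak: "peak ?Q = ereal p"
    by (simp add: peak_def)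
  have "continuous_complete_preorder ?Q"
    using kinked_pref_closed[OF assms(1,2)]
    unfolding continuous_complete_preorder_def by (auto simp: kinked_pref_def)
  moreover have "strict ?Q (ereal x) (ereal y)"
    if "0 \<le> x" "0 \<le> y" "y < x \<and> ereal x \<le> ereal p \<or> ereal p \<le> ereal x \<and> x < y" for x y
    using that assms(1,2) by (auto simp: strict_kinked_pref_iff kinked_loss_ereal)
  ultimately show "single_peaked ?Q"
    unfolding single_peaked_def peak using \<open>peak_set ?Q = {ereal p}\<close> by blast
qed

lemma exists_single_peaked:
  assumes "0 \<le> p"
  obtains Q where "single_peaked Q" "peak Q = ereal p"
  using single_peaked_kinked_pref[of 1 1 p] assms by auto

lemma exists_single_peaked_across_peak:
  assumes "0 \<le> x" "0 \<le> y" "x < q \<and> q < y \<or> y < q \<and> q < x"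
  obtains Q where "single_peaked Q" "peak Q = ereal q" "strict Q (ereal y) (ereal x)"
proof -
  have q: "0 \<le> q" using assms by linarith
  consider (left) "x < q" "q < y" | (right) "y < q" "q < x"
    using assms(3) by blast
  then show ?thesis
  proof cases
    case left
    define a where "a = (y - q) / (q - x) + 1"
    have "0 < (y - q) / (q - x)" using left by simp
    then have a: "0 < a" by (simp add: a_def)
    have "a * (q - x) = y - q + (q - x)"
      using left by (simp add: a_def field_simps)
    then have "strict (kinked_pref a 1 q) (ereal y) (ereal x)"
      using left assms(1,2) by (simp add: strict_kinked_pref_iff kinked_loss_ereal)
    with that single_peaked_kinked_pref[OF a zero_less_one q] show ?thesis by simp
  next
    case right
    define b where "b = (q - y) / (x - q) + 1"
    have "0 < (q - y) / (x - q)" using right by simp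
    then have b: "0 < b" by (simp add: b_def)
    have "b * (x - q) = q - y + (x - q)"
      using right by (simp add: b_def field_simps)
    then have "strict (kinked_pref 1 b q) (ereal y) (ereal x)"
      using right assms(1,2) by (simp add: strict_kinked_pref_iff kinked_loss_ereal)
    with that single_peaked_kinked_pref[OF zero_less_one b q] show ?thesis by simp
  qed
qed

lemma single_peaked_prefers_between:
  assumes Q: "single_peaked Q" and "0 \<le> x" "0 \<le> c"
    and between: "min (peak Q) (ereal c) \<le> ereal x \<and> ereal x \<le> max (peak Q) (ereal c)"
  shows "Q (ereal x) (ereal c)"
proof -
  consider "x = c" | "x < c" | "c < x" by linarith
  then show ?thesis
  proof cases
    case 1
    then show ?thesis using single_peaked_refl[OF Q \<open>0 \<le> x\<close>] by simp
  next
    case 2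
    then have "peak Q \<le> ereal x" using between by (auto simp: min_def split: if_splits)
    then show ?thesis using strict_above_peak[OF Q \<open>0 \<le> x\<close> _ 2] by (simp add: strict_def)
  next
    case 3
    then have "ereal x \<le> peak Q" using between by (auto simp: max_def split: if_splits)
    then show ?thesis using strict_below_peak[OF Q \<open>0 \<le> c\<close> 3] by (simp add: strict_def)
  qed
qed

lemma exists_same_peak_strict_pref_if_outside:
  assumes R: "single_peaked R" and "0 \<le> x" "0 \<le> c"
    and outside: "\<not> (min (peak R) (ereal c) \<le> ereal x \<and> ereal x \<le> max (peak R) (ereal c))"
  obtains Q where "single_peaked Q" "peak Q = peak R" "strict Q (ereal c) (ereal x)"
proof (cases rule: single_peaked_peak_cases[OF R])
  case 1
  then have "x < c" using outside by auto
  then show ?thesis using that strict_below_peak[OF R \<open>0 \<le> x\<close>] 1 R by auto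
next
  case (2 q)
  then have "x < c \<and> c \<le> q \<or> c < x \<and> q \<le> c \<or> (x < q \<and> q < c \<or> c < q \<and> q < x)"
    using outside by (auto simp: min_def max_def split: if_splits)
  then consider "x < c" "c \<le> q" | "c < x" "q \<le> c" | "x < q \<and> q < c \<or> c < q \<and> q < x"
    by blast
  then show ?thesis
  proof cases
    case 1
    then show ?thesis using that strict_below_peak[OF R \<open>0 \<le> x\<close>] 2 R by auto
  next
    case 2
    then show ?thesis using that strict_above_peak[OF R \<open>0 \<le> c\<close>] \<open>peak R = ereal q\<close> R by auto
  next
    case 3
    then obtain Q where "single_peaked Q" "peak Q = ereal q" "strict Q (ereal c) (ereal x)"
      using exists_single_peaked_across_peak[OF \<open>0 \<le> x\<close> \<open>0 \<le> c\<close>] by blast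
    then show ?thesis using that \<open>peak R = ereal q\<close> by auto
  qed
qed

section \<open>Efficiency and same-sidedness\<close>

lemma economyD:
  assumes "economy R \<Omega>"
  shows "single_peaked (R i)" and "0 < \<Omega>"
  using assms by (auto simp: economy_def)

lemma is_ruleD:
  assumes "is_rule \<phi>" "economy R \<Omega>"
  shows "0 \<le> \<phi> R \<Omega> i" and "(\<Sum>j\<in>UNIV. \<phi> R \<Omega> j) = \<Omega>"
  using assms by (auto simp: is_rule_def)

lemma real_peaks:
  assumes "economy R \<Omega>" "\<forall>j. peak (R j) \<noteq> \<infinity>"
  obtains q where "\<forall>j. peak (R j) = ereal (q j)"
proof -
  have "peak (R j) = ereal (real_of_ereal (peak (R j)))" for j
    using assms single_peaked_peak_nonneg[OF economyD(1)[OF assms(1)], of j]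
    by (cases "peak (R j)") auto
  then show ?thesis by (intro that[of "\<lambda>j. real_of_ereal (peak (R j))"]) blast
qed

lemma zexc_real_peaks:
  assumes "\<forall>j. peak (R j) = ereal (q j)"
  shows "zexc R \<Omega> = ereal ((\<Sum>j\<in>UNIV. q j) - \<Omega>)"
  using assms by (simp add: zexc_def)

lemma peak_finite_if_zexc_nonpos:
  assumes "zexc R \<Omega> \<le> 0"
  shows "peak (R j) \<noteq> \<infinity>"
proof
  assume "peak (R j) = \<infinity>"
  then have "(\<Sum>k\<in>UNIV. peak (R k)) = \<infinity>"
    unfolding sum_Pinfty by auto
  then have "zexc R \<Omega> = \<infinity>" by (simp add: zexc_def)
  with assms show False by simp
qed

lemma sum_mono_antisym:
  fixes f g :: "'a::finite \<Rightarrow> real"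
  assumes "\<forall>j. f j \<le> g j" "(\<Sum>j\<in>UNIV. g j) \<le> (\<Sum>j\<in>UNIV. f j)"
  shows "f i = g i"
  using sum_mono_inv[of f UNIV g i] sum_mono[of UNIV f g] assms by (simp add: antisym)

definition same_sided :: "('n::finite \<Rightarrow> pref) \<Rightarrow> real \<Rightarrow> ('n \<Rightarrow> real) \<Rightarrow> bool" where
  "same_sided R \<Omega> x \<longleftrightarrow> (\<forall>i. (0 \<le> zexc R \<Omega> \<longrightarrow> ereal (x i) \<le> peak (R i)) \<and>
                              (zexc R \<Omega> \<le> 0 \<longrightarrow> peak (R i) \<le> ereal (x i)))"

lemma same_sided_Pareto_optimal:
  assumes econ: "economy R \<Omega>" and same: "same_sided R \<Omega> x"
    and x: "\<forall>j. 0 \<le> x j" "(\<Sum>j\<in>UNIV. x j) = \<Omega>"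
    and y: "\<forall>j. 0 \<le> y j" "(\<Sum>j\<in>UNIV. y j) = \<Omega>"
    and improves: "\<forall>j. R j (ereal (y j)) (ereal (x j))"
  shows "y i = x i"
proof (cases "0 \<le> zexc R \<Omega>")
  case True
  have "x j \<le> y j" for j
  proof (rule ccontr)
    assume "\<not> x j \<le> y j"
    then have "strict (R j) (ereal (x j)) (ereal (y j))"
      using strict_below_peak[OF economyD(1)[OF econ]] y(1) same True by (simp add: same_sided_def)
    with improves show False by (simp add: strict_def)
  qed
  then show ?thesis using sum_mono_antisym[of x y i] x(2) y(2) by simp
next
  case False
  have "y j \<le> x j" for j
  proof (rule ccontr)
    assume "\<not> y j \<le> x j"
    then have "strict (R j) (ereal (x j)) (ereal (y j))"
      using strict_above_peak[OF economyD(1)[OF econ]] x(1) same False by (simp add: same_sided_def)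
    with improves show False by (simp add: strict_def)
  qed
  then show ?thesis using sum_mono_antisym[of y x i] x(2) y(2) by simp
qed

lemma efficient_no_transfer:
  fixes \<phi> :: "('n::finite) rule"
  assumes rule: "is_rule \<phi>" and eff: "efficient \<phi>" and econ: "economy R \<Omega>"
    and above: "peak (R i) < ereal (\<phi> R \<Omega> i)" and below: "ereal (\<phi> R \<Omega> j) < peak (R j)"
  shows False
proof -
  let ?f = "\<phi> R \<Omega>"
  have sp: "single_peaked (R k)" for k by (rule economyD(1)[OF econ])
  have "i \<noteq> j" using above below by auto
  obtain p where p: "peak (R i) = ereal p" "0 \<le> p"
    using above by (cases rule: single_peaked_peak_cases[OF sp]) auto
  obtain r where r: "?f j < r" "ereal r \<le> peak (R j)"
    using ereal_dense2[OF below] by (auto intro: less_imp_le)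
  define e where "e = min (?f i - p) (r - ?f j)"
  have e: "0 < e" "p \<le> ?f i - e" "ereal (?f j + e) \<le> peak (R j)"
    using above p r by (auto simp: e_def intro: order_trans[OF _ r(2)])
  define x where "x k = ?f k + (if k = j then e else 0) - (if k = i then e else 0)" for k
  have "\<forall>k. 0 \<le> x k"
    using is_ruleD(1)[OF rule econ] e(1,2) p(2) \<open>i \<noteq> j\<close> by (auto simp: x_def)
  moreover have "(\<Sum>k\<in>UNIV. x k) = \<Omega>"
    using is_ruleD(2)[OF rule econ] by (simp add: x_def sum.distrib sum_subtractf)
  moreover have "strict (R i) (ereal (x i)) (ereal (?f i))"
    using strict_above_peak[OF sp[of i], of "?f i - e" "?f i"] e p \<open>i \<noteq> j\<close> by (simp add: x_def)
  moreover have "R k (ereal (x k)) (ereal (?f k))" for k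
  proof -
    consider "k = i" | "k = j" | "k \<noteq> i" "k \<noteq> j" by blast
    then show ?thesis
    proof cases
      case 1
      then show ?thesis using \<open>strict (R i) (ereal (x i)) (ereal (?f i))\<close> by (simp add: strict_def)
    next
      case 2
      then show ?thesis
        using strict_below_peak[OF sp[of j], of "?f j" "?f j + e"] is_ruleD(1)[OF rule econ] e \<open>i \<noteq> j\<close>
        by (simp add: x_def strict_def)
    next
      case 3
      then show ?thesis using single_peaked_refl[OF sp[of k] is_ruleD(1)[OF rule econ]] by (simp add: x_def)
    qed
  qed
  ultimately show False
    using eff econ unfolding efficient_def by blast
qed

lemma same_sided_if_efficient:
  fixes \<phi> :: "('n::finite) rule"
  assumes rule: "is_rule \<phi>" and eff: "efficient \<phi>" and econ: "economy R \<Omega>"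
  shows "same_sided R \<Omega> (\<phi> R \<Omega>)"
  unfolding same_sided_def
proof (intro allI conjI impI)
  let ?f = "\<phi> R \<Omega>"
  have budget: "(\<Sum>j\<in>UNIV. ?f j) = \<Omega>" by (rule is_ruleD(2)[OF rule econ])
  fix i
  assume z: "0 \<le> zexc R \<Omega>"
  show "ereal (?f i) \<le> peak (R i)"
  proof (rule ccontr)
    assume "\<not> ?thesis"
    then have above: "peak (R i) < ereal (?f i)" by simp
    have le: "peak (R j) \<le> ereal (?f j)" for j
      using efficient_no_transfer[OF rule eff econ above, of j] by force
    then have "\<forall>j. peak (R j) \<noteq> \<infinity>"
      by (metis PInfty_neq_ereal(1) ereal_infty_less_eq(1))
    then obtain q where q: "\<forall>j. peak (R j) = ereal (q j)"
      using real_peaks[OF econ] by blast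
    have "\<forall>j. q j \<le> ?f j" "(\<Sum>j\<in>UNIV. ?f j) \<le> (\<Sum>j\<in>UNIV. q j)"
      using le q z budget zexc_real_peaks[OF q, of \<Omega>] by simp_all
    then have "q i = ?f i" by (rule sum_mono_antisym)
    with above q show False by simp
  qed
next
  let ?f = "\<phi> R \<Omega>"
  have budget: "(\<Sum>j\<in>UNIV. ?f j) = \<Omega>" by (rule is_ruleD(2)[OF rule econ])
  fix i
  assume z: "zexc R \<Omega> \<le> 0"
  show "peak (R i) \<le> ereal (?f i)"
  proof (rule ccontr)
    assume "\<not> ?thesis"
    then have below: "ereal (?f i) < peak (R i)" by simp
    obtain q where q: "\<forall>j. peak (R j) = ereal (q j)"
      using real_peaks[OF econ] peak_finite_if_zexc_nonpos[OF z] by blast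
    have "ereal (?f j) \<le> peak (R j)" for j
      using efficient_no_transfer[OF rule eff econ _ below, of j] by force
    then have "\<forall>j. ?f j \<le> q j" "(\<Sum>j\<in>UNIV. q j) \<le> (\<Sum>j\<in>UNIV. ?f j)"
      using q z budget zexc_real_peaks[OF q, of \<Omega>] by simp_all
    then have "?f i = q i" by (rule sum_mono_antisym)
    with below q show False by simp
  qed
qed

lemma efficient_iff_same_sided:
  fixes \<phi> :: "('n::finite) rule"
  assumes rule: "is_rule \<phi>"
  shows "efficient \<phi> \<longleftrightarrow> (\<forall>R \<Omega>. economy R \<Omega> \<longrightarrow> same_sided R \<Omega> (\<phi> R \<Omega>))"
proof
  show "efficient \<phi> \<Longrightarrow> \<forall>R \<Omega>. economy R \<Omega> \<longrightarrow> same_sided R \<Omega> (\<phi> R \<Omega>)"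
    using same_sided_if_efficient[OF rule] by blast
next
  assume same: "\<forall>R \<Omega>. economy R \<Omega> \<longrightarrow> same_sided R \<Omega> (\<phi> R \<Omega>)"
  show "efficient \<phi>"
    unfolding efficient_def
  proof (intro allI impI notI)
    fix R :: "'n \<Rightarrow> pref" and \<Omega> :: real
    assume econ: "economy R \<Omega>"
    assume "\<exists>x :: 'n \<Rightarrow> real. (\<forall>j. x j \<ge> 0) \<and> (\<Sum>j\<in>UNIV. x j) = \<Omega> \<and>
            (\<forall>i. R i (ereal (x i)) (ereal (\<phi> R \<Omega> i))) \<and>
            (\<exists>i. strict (R i) (ereal (x i)) (ereal (\<phi> R \<Omega> i)))"
    then obtain x i where x: "\<forall>j. 0 \<le> x j" "(\<Sum>j\<in>UNIV. x j) = \<Omega>"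
      and improves: "\<forall>j. R j (ereal (x j)) (ereal (\<phi> R \<Omega> j))"
      and strict: "strict (R i) (ereal (x i)) (ereal (\<phi> R \<Omega> i))"
      by blast
    have "x i = \<phi> R \<Omega> i"
      using same_sided_Pareto_optimal[OF econ _ _ _ x improves] same econ is_ruleD[OF rule econ]
      by blast
    with strict show False by (simp add: strict_def)
  qed
qed

section \<open>Non-obvious manipulability\<close>

definition between_peak_and_equal_division ::
    "('n::finite \<Rightarrow> pref) \<Rightarrow> real \<Rightarrow> ('n \<Rightarrow> real) \<Rightarrow> bool" where
  "between_peak_and_equal_division R \<Omega> x \<longleftrightarrow>
     (\<forall>i. min (peak (R i)) (ereal (\<Omega> / real CARD('n))) \<le> ereal (x i) \<and>
          ereal (x i) \<le> max (peak (R i)) (ereal (\<Omega> / real CARD('n))))"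

lemma equal_division_guarantee_eq:
  fixes \<phi> :: "('n::finite) rule"
  assumes rule: "is_rule \<phi>" and edg: "equal_division_guarantee \<phi>" and econ: "economy R \<Omega>"
    and peak: "peak (R i) = ereal (\<Omega> / real CARD('n))"
  shows "\<phi> R \<Omega> i = \<Omega> / real CARD('n)"
proof (rule ccontr)
  let ?c = "\<Omega> / real CARD('n)"
  have sp: "single_peaked (R i)" by (rule economyD(1)[OF econ])
  have c: "0 \<le> ?c" using economyD(2)[OF econ] by simp
  have x: "0 \<le> \<phi> R \<Omega> i" by (rule is_ruleD(1)[OF rule econ])
  assume "\<phi> R \<Omega> i \<noteq> ?c"
  then have "strict (R i) (ereal ?c) (ereal (\<phi> R \<Omega> i))"
    using strict_below_peak[OF sp x] strict_above_peak[OF sp c] peak by (cases "\<phi> R \<Omega> i < ?c") auto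
  moreover have "indiff (R i) (ereal (\<phi> R \<Omega> i)) (ereal ?c)"
    using edg econ peak unfolding equal_division_guarantee_def by blast
  ultimately show False by (simp add: strict_def indiff_def)
qed

lemma NOM_outcome_preferred_to_equal_division:
  fixes \<phi> :: "('n::finite) rule"
  assumes rule: "is_rule \<phi>" and opo: "own_peak_only \<phi>" and edg: "equal_division_guarantee \<phi>"
    and nom: "NOM \<phi>" and econ: "economy R \<Omega>"
    and Q: "single_peaked Q" "peak Q = peak (R i)"
  shows "Q (ereal (\<phi> R \<Omega> i)) (ereal (\<Omega> / real CARD('n)))"
proof (rule ccontr)
  let ?c = "\<Omega> / real CARD('n)"
  have c: "0 \<le> ?c" using economyD(2)[OF econ] by simp
  assume "\<not> ?thesis"
  then have worse: "strict Q (ereal ?c) (ereal (\<phi> R \<Omega> i))"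
    using single_peaked_total[OF Q(1) is_ruleD(1)[OF rule econ, of i] c] by (simp add: strict_def)
  obtain E where E: "single_peaked E" "peak E = ereal ?c"
    using exists_single_peaked[OF c] by blast
  have reporting_E: "\<phi> R' \<Omega> i = ?c" if "\<forall>j. single_peaked (R' j)" "R' i = E" for R'
    using equal_division_guarantee_eq[OF rule edg, of R' \<Omega> i] that E economyD(2)[OF econ]
    by (simp add: economy_def)
  have reporting_Q: "\<phi> (R(i := Q)) \<Omega> i = \<phi> R \<Omega> i"
    using opo econ Q unfolding own_peak_only_def by metis
  have all_sp: "\<forall>j. single_peaked (R j)" using econ by (simp add: economy_def)
  have "manipulation \<phi> i Q \<Omega> E"
    unfolding manipulation_def
    using all_sp reporting_Q reporting_E[of "R(i := E)"] E(1) worse by (intro exI[of _ R]) simp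
  moreover have "\<exists>x\<in>option_set \<phi> i Q \<Omega>. strict Q (ereal x') (ereal x)"
    if "x' \<in> option_set \<phi> i E \<Omega>" for x'
  proof -
    have "x' = ?c"
      using that reporting_E unfolding option_set_def by blast
    moreover have "\<phi> R \<Omega> i \<in> option_set \<phi> i Q \<Omega>"
      unfolding option_set_def using all_sp Q(1) reporting_Q
      by (intro CollectI exI[of _ "R(i := Q)"]) simp
    ultimately show ?thesis using worse by blast
  qed
  ultimately have "obvious_manipulation \<phi> i Q \<Omega> E"
    by (simp add: obvious_manipulation_def)
  with nom Q(1) E(1) economyD(2)[OF econ] show False
    unfolding NOM_def by blast
qed

lemma between_if_NOM:
  fixes \<phi> :: "('n::finite) rule"
  assumes rule: "is_rule \<phi>" and opo: "own_peak_only \<phi>" and edg: "equal_division_guarantee \<phi>"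
    and nom: "NOM \<phi>" and econ: "economy R \<Omega>"
  shows "between_peak_and_equal_division R \<Omega> (\<phi> R \<Omega>)"
  unfolding between_peak_and_equal_division_def
proof (rule allI, rule ccontr)
  fix i
  let ?c = "\<Omega> / real CARD('n)"
  have "0 \<le> ?c" using economyD(2)[OF econ] by simp
  assume "\<not> (min (peak (R i)) (ereal ?c) \<le> ereal (\<phi> R \<Omega> i) \<and>
      ereal (\<phi> R \<Omega> i) \<le> max (peak (R i)) (ereal ?c))"
  then obtain Q where Q: "single_peaked Q" "peak Q = peak (R i)"
      and "strict Q (ereal ?c) (ereal (\<phi> R \<Omega> i))"
    using exists_same_peak_strict_pref_if_outside[OF economyD(1)[OF econ] is_ruleD(1)[OF rule econ]
        \<open>0 \<le> ?c\<close>]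
    by blast
  then show False
    using NOM_outcome_preferred_to_equal_division[OF rule opo edg nom econ Q] by (simp add: strict_def)
qed

lemma between_at_equal_division_peak:
  fixes R :: "'n::finite \<Rightarrow> pref"
  assumes "between_peak_and_equal_division R \<Omega> x" "peak (R i) = ereal (\<Omega> / real CARD('n))"
  shows "x i = \<Omega> / real CARD('n)"
proof -
  have "min (peak (R i)) (ereal (\<Omega> / real CARD('n))) \<le> ereal (x i) \<and>
      ereal (x i) \<le> max (peak (R i)) (ereal (\<Omega> / real CARD('n)))"
    using assms(1) unfolding between_peak_and_equal_division_def by blast
  then show ?thesis using assms(2) by simp
qed

lemma equal_division_guarantee_if_between:
  fixes \<phi> :: "('n::finite) rule"
  assumes between: "\<forall>R \<Omega>. economy R \<Omega> \<longrightarrow> between_peak_and_equal_division R \<Omega> (\<phi> R \<Omega>)"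
  shows "equal_division_guarantee \<phi>"
  unfolding equal_division_guarantee_def
proof (intro allI impI)
  fix R :: "'n \<Rightarrow> pref" and \<Omega> i
  let ?c = "\<Omega> / real CARD('n)"
  assume econ: "economy R \<Omega>" and peak: "peak (R i) = ereal ?c"
  then have "\<phi> R \<Omega> i = ?c"
    using between between_at_equal_division_peak by blast
  moreover have "0 \<le> ?c" using economyD(2)[OF econ] by simp
  ultimately show "indiff (R i) (ereal (\<phi> R \<Omega> i)) (ereal ?c)"
    using single_peaked_refl[OF economyD(1)[OF econ]] by (simp add: indiff_def)
qed

lemma between_others_at_equal_division:
  fixes R :: "'n::finite \<Rightarrow> pref"
  assumes between: "between_peak_and_equal_division R \<Omega> x" and budget: "(\<Sum>j\<in>UNIV. x j) = \<Omega>"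
    and others: "\<forall>j. j \<noteq> i \<longrightarrow> peak (R j) = ereal (\<Omega> / real CARD('n))"
  shows "x i = \<Omega> / real CARD('n)"
proof -
  let ?c = "\<Omega> / real CARD('n)"
  have "x j = ?c" if "j \<noteq> i" for j
    using between_at_equal_division_peak[OF between] others that by blast
  then have "(\<Sum>j\<in>UNIV. x j - ?c) = x i - ?c"
    by (subst sum.remove[of UNIV i]) auto
  moreover have "(\<Sum>j\<in>UNIV. x j - ?c) = 0"
    using budget by (simp add: sum_subtractf)
  ultimately show ?thesis by simp
qed

lemma NOM_if_between:
  fixes \<phi> :: "('n::finite) rule"
  assumes rule: "is_rule \<phi>"
    and between: "\<forall>R \<Omega>. economy R \<Omega> \<longrightarrow> between_peak_and_equal_division R \<Omega> (\<phi> R \<Omega>)"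
  shows "NOM \<phi>"
  unfolding NOM_def
proof (intro allI impI notI)
  fix i Ri Ri' and \<Omega> :: real
  let ?c = "\<Omega> / real CARD('n)"
  assume Ri: "single_peaked Ri" and Ri': "single_peaked Ri'" and \<Omega>: "0 < \<Omega>"
    and manip: "obvious_manipulation \<phi> i Ri \<Omega> Ri'"
  have c: "0 \<le> ?c" using \<Omega> by simp
  obtain E where E: "single_peaked E" "peak E = ereal ?c"
    using exists_single_peaked[OF c] by blast
  define R0 where "R0 = (\<lambda>_. E)(i := Ri')"
  have sp0: "\<forall>j. single_peaked (R0 j)" using E Ri' by (simp add: R0_def)
  then have econ0: "economy R0 \<Omega>" using \<Omega> by (simp add: economy_def)
  have "\<forall>j. j \<noteq> i \<longrightarrow> peak (R0 j) = ereal ?c"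
    using E by (simp add: R0_def)
  then have "\<phi> R0 \<Omega> i = ?c"
    using between_others_at_equal_division is_ruleD(2)[OF rule econ0] between econ0 by blast
  then have "?c \<in> option_set \<phi> i Ri' \<Omega>"
    unfolding option_set_def using sp0 by (intro CollectI exI[of _ R0]) (simp add: R0_def)
  then obtain x where "x \<in> option_set \<phi> i Ri \<Omega>" and worse: "strict Ri (ereal ?c) (ereal x)"
    using manip unfolding obvious_manipulation_def by blast
  then obtain R where R: "\<forall>j. single_peaked (R j)" "R i = Ri" "x = \<phi> R \<Omega> i"
    unfolding option_set_def by blast
  then have econ: "economy R \<Omega>" using \<Omega> by (simp add: economy_def)
  have "Ri (ereal x) (ereal ?c)"
    using single_peaked_prefers_between[OF Ri is_ruleD(1)[OF rule econ, of i] c] between econ R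
    unfolding between_peak_and_equal_division_def by auto
  with worse show False by (simp add: strict_def)
qed

section \<open>Simple rules\<close>

definition simple_allocation :: "('n::finite \<Rightarrow> pref) \<Rightarrow> real \<Rightarrow> ('n \<Rightarrow> real) \<Rightarrow> bool" where
  "simple_allocation R \<Omega> x \<longleftrightarrow>
    (\<exists>\<nu> :: 'n \<Rightarrow> real.
       (\<forall>i\<in>UNIV - simple_agents R \<Omega>. 0 \<le> \<nu> i \<and>
            ereal (\<nu> i) \<le> \<bar>peak (R i) - ereal (\<Omega> / real CARD('n))\<bar>) \<and>
       ereal (\<Sum>j\<in>UNIV - simple_agents R \<Omega>. \<nu> j) = Eexc R \<Omega> \<and>
       (\<forall>i. (i \<in> simple_agents R \<Omega> \<longrightarrow> ereal (x i) = peak (R i)) \<and>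
            (i \<notin> simple_agents R \<Omega> \<and> zexc R \<Omega> \<ge> 0 \<longrightarrow> x i = \<Omega> / real CARD('n) + \<nu> i) \<and>
            (i \<notin> simple_agents R \<Omega> \<and> zexc R \<Omega> \<le> 0 \<longrightarrow> x i = \<Omega> / real CARD('n) - \<nu> i)))"

lemma simple_rule_iff_simple_allocation:
  "simple_rule \<phi> \<longleftrightarrow> own_peak_only \<phi> \<and> (\<forall>R \<Omega>. economy R \<Omega> \<longrightarrow> simple_allocation R \<Omega> (\<phi> R \<Omega>))"
  unfolding simple_rule_def simple_allocation_def ..

lemma not_simple_agent_iff:
  fixes R :: "'n::finite \<Rightarrow> pref"
  shows "i \<notin> simple_agents R \<Omega> \<longleftrightarrow>
    (0 \<le> zexc R \<Omega> \<longrightarrow> ereal (\<Omega> / real CARD('n)) \<le> peak (R i)) \<and>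
    (zexc R \<Omega> \<le> 0 \<longrightarrow> peak (R i) \<le> ereal (\<Omega> / real CARD('n)))"
  by (auto simp: simple_agents_def not_less)

lemma same_sided_between_if_simple_allocation:
  fixes R :: "'n::finite \<Rightarrow> pref"
  assumes "simple_allocation R \<Omega> x"
  shows "same_sided R \<Omega> x \<and> between_peak_and_equal_division R \<Omega> x"
proof -
  let ?c = "\<Omega> / real CARD('n)"
  obtain \<nu> where bounds: "\<forall>i\<in>UNIV - simple_agents R \<Omega>. 0 \<le> \<nu> i \<and> ereal (\<nu> i) \<le> \<bar>peak (R i) - ereal ?c\<bar>"
    and alloc: "\<forall>i. (i \<in> simple_agents R \<Omega> \<longrightarrow> ereal (x i) = peak (R i)) \<and>
            (i \<notin> simple_agents R \<Omega> \<and> zexc R \<Omega> \<ge> 0 \<longrightarrow> x i = ?c + \<nu> i) \<and>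
            (i \<notin> simple_agents R \<Omega> \<and> zexc R \<Omega> \<le> 0 \<longrightarrow> x i = ?c - \<nu> i)"
    using assms unfolding simple_allocation_def by blast
  have "(0 \<le> zexc R \<Omega> \<longrightarrow> ereal (x i) \<le> peak (R i)) \<and> (zexc R \<Omega> \<le> 0 \<longrightarrow> peak (R i) \<le> ereal (x i)) \<and>
      min (peak (R i)) (ereal ?c) \<le> ereal (x i) \<and> ereal (x i) \<le> max (peak (R i)) (ereal ?c)" for i
  proof (cases "i \<in> simple_agents R \<Omega>")
    case True
    then show ?thesis using alloc by simp
  next
    case False
    have nu: "0 \<le> \<nu> i" "ereal (\<nu> i) \<le> \<bar>peak (R i) - ereal ?c\<bar>"
      using bounds False by auto
    have "0 \<le> zexc R \<Omega> \<Longrightarrow> x i = ?c + \<nu> i" "zexc R \<Omega> \<le> 0 \<Longrightarrow> x i = ?c - \<nu> i"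
      using alloc False by auto
    moreover have "0 \<le> zexc R \<Omega> \<Longrightarrow> ereal ?c \<le> peak (R i)"
      "zexc R \<Omega> \<le> 0 \<Longrightarrow> peak (R i) \<le> ereal ?c"
      using False not_simple_agent_iff by blast+
    ultimately show ?thesis
      using nu linear[of 0 "zexc R \<Omega>"] by (cases "peak (R i)"; cases "0 \<le> zexc R \<Omega>") auto
  qed
  then show ?thesis
    unfolding same_sided_def between_peak_and_equal_division_def by blast
qed

lemma simple_allocation_if_same_sided_between:
  fixes R :: "'n::finite \<Rightarrow> pref"
  assumes budget: "(\<Sum>j\<in>UNIV. x j) = \<Omega>" and same: "same_sided R \<Omega> x"
    and between: "between_peak_and_equal_division R \<Omega> x"
  shows "simple_allocation R \<Omega> x"
proof -
  let ?c = "\<Omega> / real CARD('n)" and ?S = "simple_agents R \<Omega>" and ?z = "zexc R \<Omega>"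
  let ?N = "UNIV - ?S"
  define \<nu> where "\<nu> i = \<bar>x i - ?c\<bar>" for i
  have in_range: "min (peak (R i)) (ereal ?c) \<le> ereal (x i) \<and> ereal (x i) \<le> max (peak (R i)) (ereal ?c)"
    for i using between unfolding between_peak_and_equal_division_def by blast
  have sides: "(0 \<le> ?z \<longrightarrow> ereal (x i) \<le> peak (R i)) \<and> (?z \<le> 0 \<longrightarrow> peak (R i) \<le> ereal (x i))"
    for i using same unfolding same_sided_def by blast
  have simple: "ereal (x i) = peak (R i)" if i: "i \<in> ?S" for i
  proof -
    consider "0 \<le> ?z" "peak (R i) < ereal ?c" | "?z \<le> 0" "ereal ?c < peak (R i)"
      using i unfolding simple_agents_def by blast
    then show ?thesis
    proof cases
      case 1
      then have "min (peak (R i)) (ereal ?c) = peak (R i)"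
        by (intro min_absorb1 less_imp_le)
      with in_range[of i] sides[of i] 1 show ?thesis by (metis antisym)
    next
      case 2
      then have "max (peak (R i)) (ereal ?c) = peak (R i)"
        by (intro max_absorb1 less_imp_le)
      with in_range[of i] sides[of i] 2 show ?thesis by (metis antisym)
    qed
  qed
  have above: "?c \<le> x i" if "i \<notin> ?S" "0 \<le> ?z" for i
  proof -
    have "min (peak (R i)) (ereal ?c) = ereal ?c"
      using that not_simple_agent_iff[of i R \<Omega>] by (simp add: min_absorb2)
    then show ?thesis using in_range[of i] by simp
  qed
  have below: "x i \<le> ?c" if "i \<notin> ?S" "?z \<le> 0" for i
  proof -
    have "max (peak (R i)) (ereal ?c) = ereal ?c"
      using that not_simple_agent_iff[of i R \<Omega>] by (simp add: max_absorb2)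
    then show ?thesis using in_range[of i] by simp
  qed
  have bounds: "0 \<le> \<nu> i \<and> ereal (\<nu> i) \<le> \<bar>peak (R i) - ereal ?c\<bar>" for i
    using in_range[of i] by (cases "peak (R i)") (auto simp: \<nu>_def min_def max_def split: if_splits)
  have excess: "ereal (\<Sum>j\<in>?N. \<nu> j) = Eexc R \<Omega>"
  proof -
    have "(\<Sum>j\<in>?S. peak (R j)) = (\<Sum>j\<in>?S. ereal (x j))"
      using simple by (intro sum.cong) simp_all
    moreover have "(\<Sum>j\<in>?S. x j) + (\<Sum>j\<in>?N. x j) = \<Omega>"
      using budget sum.subset_diff[of ?S UNIV x] by simp
    moreover have "(\<Sum>j\<in>?N. \<nu> j) = \<bar>(\<Sum>j\<in>?N. x j) - real (card ?N) * ?c\<bar>"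
    proof (cases "0 \<le> ?z")
      case True
      then have "(\<Sum>j\<in>?N. \<nu> j) = (\<Sum>j\<in>?N. x j - ?c)"
        using above by (intro sum.cong) (auto simp: \<nu>_def)
      moreover have "0 \<le> (\<Sum>j\<in>?N. x j - ?c)"
        using above True by (intro sum_nonneg) auto
      ultimately show ?thesis by (simp add: sum_subtractf)
    next
      case False
      then have "(\<Sum>j\<in>?N. \<nu> j) = (\<Sum>j\<in>?N. ?c - x j)"
        using below by (intro sum.cong) (auto simp: \<nu>_def)
      moreover have "0 \<le> (\<Sum>j\<in>?N. ?c - x j)"
        using below False by (intro sum_nonneg) auto
      ultimately show ?thesis by (simp add: sum_subtractf)
    qed
    ultimately show ?thesis
      unfolding Eexc_def by (simp add: algebra_simps)
  qed
  show ?thesis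
    unfolding simple_allocation_def
    using bounds excess simple above below by (intro exI[of _ \<nu>]) (auto simp: \<nu>_def)
qed

lemma simple_rule_iff:
  fixes \<phi> :: "('n::finite) rule"
  assumes rule: "is_rule \<phi>"
  shows "simple_rule \<phi> \<longleftrightarrow> own_peak_only \<phi> \<and>
    (\<forall>R \<Omega>. economy R \<Omega> \<longrightarrow>
       same_sided R \<Omega> (\<phi> R \<Omega>) \<and> between_peak_and_equal_division R \<Omega> (\<phi> R \<Omega>))"
  unfolding simple_rule_iff_simple_allocation
  using same_sided_between_if_simple_allocation
    simple_allocation_if_same_sided_between[OF is_ruleD(2)[OF rule]] by blast

theorem theorem2:
  fixes \<phi> :: "('n::finite) rule"
  assumes "is_rule \<phi>"
  shows "(own_peak_only \<phi> \<and> efficient \<phi> \<and> equal_division_guarantee \<phi> \<and> NOM \<phi>)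
         \<longleftrightarrow> simple_rule \<phi>"
  using simple_rule_iff[OF assms] efficient_iff_same_sided[OF assms] between_if_NOM[OF assms]
    equal_division_guarantee_if_between NOM_if_between[OF assms]
  by blast

end
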